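(* Let $\Sigma\subseteq\mathcal L_{\Diamond\forall}$ be closed under subformulas and let $\mathfrak Q=(W,\preccurlyeq,S,\ell)$ be an honest, deterministic $\Sigma$-quasimodel. Define a valuation $[\![\cdot]\!]_{\mathfrak Q}$ on the dynamical system $(W,\text{up-set topology of }\preccurlyeq,S)$ by $[\![p]\!]_{\mathfrak Q}=\{w\in W: p\in\ell^+(w)\}$, extended to all formulas by the usual recursive clauses. Then for all formulas $\varphi\in\mathcal L_\Diamond$ and all $w\in W$: (1) if $\varphi\in\ell^+(w)$ then $w\in[\![\varphi]\!]_{\mathfrak Q}$, and (2) if $\varphi\in\ell^-(w)$ then $w\notin[\![\varphi]\!]_{\mathfrak Q}$.
   Context: $\mathcal L_{\Diamond\forall}$: formulas $\varphi::=\bot\mid p\mid\varphi\wedge\varphi\mid\varphi\vee\varphi\mid\varphi\to\varphi\mid\circ\varphi\mid\Diamond\varphi\mid\forall\varphi$; $\mathcal L_\Diamond$ is its $\forall$-free fragment. Recursive clauses of a valuation on a dynamical system $(X,\mathcal T,f)$: $[\![\bot]\!]=\varnothing$, $[\![\varphi\wedge\psi]\!]=[\![\varphi]\!]\cap[\![\psi]\!]$, $[\![\varphi\vee\psi]\!]=[\![\varphi]\!]\cup[\![\psi]\!]$, $[\![\varphi\to\psi]\!]=((X\setminus[\![\varphi]\!])\cup[\![\psi]\!])^\circ$, $[\![\circ\varphi]\!]=f^{-1}[\![\varphi]\!]$, $[\![\Diamond\varphi]\!]=\bigcup_nf^{-n}[\![\varphi]\!]$, $[\![\forall\varphi]\!]=X$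 if $[\![\varphi]\!]=X$ else $\varnothing$. The up-set topology of a partial order has the upward closed sets as open sets. A $\Sigma$-type is a pair $\Phi=(\Phi^+,\Phi^-)$ of finite subsets of $\Sigma$ with: (1) $\Phi^-\cap\Phi^+=\varnothing$; (2) $\bot\notin\Phi^+$; (3) $\varphi\wedge\psi\in\Phi^+\Rightarrow\varphi,\psi\in\Phi^+$; (4) $\varphi\wedge\psi\in\Phi^-\Rightarrow\varphi\in\Phi^-$ or $\psi\in\Phi^-$; (5) $\varphi\vee\psi\in\Phi^+\Rightarrow\varphi\in\Phi^+$ or $\psi\in\Phi^+$; (6) $\varphi\vee\psi\in\Phi^-\Rightarrow\varphi,\psi\in\Phi^-$; (7) $\varphi\to\psi\in\Phi^+\Rightarrow\varphi\in\Phi^-$ or $\psi\in\Phi^+$; (8) $\varphi\to\psi\in\Phi^-\Rightarrow\psi\in\Phi^-$; (9) $\Diamond\varphi\in\Phi^-\Rightarrow\varphi\in\Phi^-$. $\Phi\preccurlyeq_T\Psi$ means $\Phi^+\subseteq\Psi^+$ and $\Psi^-\subseteq\Phi^-$. A pair $(\Phi,\Psi)$ of types is sensible if: $\circ\varphi\in\Phi^+\Rightarrow\varphi\in\Psi^+$; $\circ\varphi\in\Phi^-\Rightarrow\varphi\in\Psi^-$; $\Diamond\varphi\in\Phi^+\Rightarrow\varphi\in\Phi^+$ or $\Diamond\varphi\in\Psi^+$; $\Diamond\varphi\in\Phi^-\Rightarrow\Diamond\varphi\in\Psi^-$; $\forall\varphi\in\Phi^+\Leftrightarrow\forall\varphi\in\Psi^+$;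 $\forall\varphi\in\Phi^-\Leftrightarrow\forall\varphi\in\Psi^-$. A $\Sigma$-quasimodel is $(W,\preccurlyeq,S,\ell)$ where $\preccurlyeq$ is a partial order on $W$; $\ell$ assigns to each $w$ a $\Sigma$-type $\ell(w)=(\ell^+(w),\ell^-(w))$ with $w\preccurlyeq v\Rightarrow\ell(w)\preccurlyeq_T\ell(v)$; whenever $\varphi\to\psi\in\ell^-(w)$ there is $v\succcurlyeq w$ with $\varphi\in\ell^+(v)$, $\psi\in\ell^-(v)$; $S\subseteq W\times W$ is forward confluent (if $w\preccurlyeq w'$ and $w\mathrel Sv$ then there is $v'\succcurlyeq v$ with $w'\mathrel Sv'$); every pair $(\ell(w),\ell(v))$ with $w\mathrel Sv$ is sensible; $S$ is serial; and $S$ is $\omega$-sensible: whenever $\Diamond\varphi\in\ell^+(w)$ there are $n\ge0$ and $v$ with $w\mathrel{S^n}v$ and $\varphi\in\ell^+(v)$. It is honest if for all $w$ and $\forall\varphi\in\Sigma$: $\forall\varphi\in\ell^+(w)$ implies $\varphi\in\ell^+(v)$ for all $v\in W$, and $\forall\varphi\in\ell^-(w)$ implies $\varphi\in\ell^-(v)$ for some $v\in W$. It is deterministic if $S$ is a function. *)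

theory Defs
  imports "HOL-Analysis.Analysis"
begin

datatype 'a fml =
    Bot
  | Var 'a
  | And "'a fml" "'a fml"
  | Or "'a fml" "'a fml"
  | Imp "'a fml" "'a fml"
  | Next "'a fml"
  | Dia "'a fml"
  | All "'a fml"

fun forall_free :: "'a fml \<Rightarrow> bool" where
  "forall_free Bot = True"
| "forall_free (Var p) = True"
| "forall_free (And a b) = (forall_free a \<and> forall_free b)"
| "forall_free (Or a b) = (forall_free a \<and> forall_free b)"
| "forall_free (Imp a b) = (forall_free a \<and> forall_free b)"
| "forall_free (Next a) = forall_free a"
| "forall_free (Dia a) = forall_free a"
| "forall_free (All a) = False"

fun subformulas :: "'a fml \<Rightarrow> 'a fml set" where
  "subformulas Bot = {Bot}"
| "subformulas (Var p) = {Var p}"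
| "subformulas (And a b) = insert (And a b) (subformulas a \<union> subformulas b)"
| "subformulas (Or a b) = insert (Or a b) (subformulas a \<union> subformulas b)"
| "subformulas (Imp a b) = insert (Imp a b) (subformulas a \<union> subformulas b)"
| "subformulas (Next a) = insert (Next a) (subformulas a)"
| "subformulas (Dia a) = insert (Dia a) (subformulas a)"
| "subformulas (All a) = insert (All a) (subformulas a)"

definition subformula_closed :: "'a fml set \<Rightarrow> bool" where
  "subformula_closed \<Sigma> \<longleftrightarrow> (\<forall>\<phi>\<in>\<Sigma>. subformulas \<phi> \<subseteq> \<Sigma>)"

fun val :: "'w topology \<Rightarrow> ('w \<Rightarrow> 'w) \<Rightarrow> ('a \<Rightarrow> 'w set) \<Rightarrow> 'a fml \<Rightarrow> 'w set" where
  "val T f V Bot = {}"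
| "val T f V (Var p) = V p"
| "val T f V (And a b) = val T f V a \<inter> val T f V b"
| "val T f V (Or a b) = val T f V a \<union> val T f V b"
| "val T f V (Imp a b) = T interior_of ((topspace T - val T f V a) \<union> val T f V b)"
| "val T f V (Next a) = topspace T \<inter> f -` val T f V a"
| "val T f V (Dia a) = (\<Union>n. topspace T \<inter> (f ^^ n) -` val T f V a)"
| "val T f V (All a) = (if val T f V a = topspace T then topspace T else {})"

definition upset_topology :: "'w set \<Rightarrow> ('w \<Rightarrow> 'w \<Rightarrow> bool) \<Rightarrow> 'w topology" where
  "upset_topology W leq =
     topology (\<lambda>U. U \<subseteq> W \<and> (\<forall>w\<in>U. \<forall>v\<in>W. leq w v \<longrightarrow> v \<in> U))"

definition is_type :: "'a fml set \<Rightarrow> 'a fml set \<times> 'a fml set \<Rightarrow> bool" where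
  "is_type \<Sigma> \<Phi> \<longleftrightarrow>
     (let P = fst \<Phi>; N = snd \<Phi> in
       finite P \<and> finite N \<and> P \<subseteq> \<Sigma> \<and> N \<subseteq> \<Sigma> \<and>
       N \<inter> P = {} \<and>
       Bot \<notin> P \<and>
       (\<forall>a b. And a b \<in> P \<longrightarrow> a \<in> P \<and> b \<in> P) \<and>
       (\<forall>a b. And a b \<in> N \<longrightarrow> a \<in> N \<or> b \<in> N) \<and>
       (\<forall>a b. Or a b \<in> P \<longrightarrow> a \<in> P \<or> b \<in> P) \<and>
       (\<forall>a b. Or a b \<in> N \<longrightarrow> a \<in> N \<and> b \<in> N) \<and>
       (\<forall>a b. Imp a b \<in> P \<longrightarrow> a \<in> N \<or> b \<in> P) \<and>
       (\<forall>a b. Imp a b \<in> N \<longrightarrow> b \<in> N) \<and>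
       (\<forall>a. Dia a \<in> N \<longrightarrow> a \<in> N))"

definition type_le :: "'a fml set \<times> 'a fml set \<Rightarrow> 'a fml set \<times> 'a fml set \<Rightarrow> bool" where
  "type_le \<Phi> \<Psi> \<longleftrightarrow> fst \<Phi> \<subseteq> fst \<Psi> \<and> snd \<Psi> \<subseteq> snd \<Phi>"

definition sensible :: "'a fml set \<times> 'a fml set \<Rightarrow> 'a fml set \<times> 'a fml set \<Rightarrow> bool" where
  "sensible \<Phi> \<Psi> \<longleftrightarrow>
     (\<forall>a. Next a \<in> fst \<Phi> \<longrightarrow> a \<in> fst \<Psi>) \<and>
     (\<forall>a. Next a \<in> snd \<Phi> \<longrightarrow> a \<in> snd \<Psi>) \<and>
     (\<forall>a. Dia a \<in> fst \<Phi> \<longrightarrow> a \<in> fst \<Phi> \<or> Dia a \<in> fst \<Psi>) \<and>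
     (\<forall>a. Dia a \<in> snd \<Phi> \<longrightarrow> Dia a \<in> snd \<Psi>) \<and>
     (\<forall>a. All a \<in> fst \<Phi> \<longleftrightarrow> All a \<in> fst \<Psi>) \<and>
     (\<forall>a. All a \<in> snd \<Phi> \<longleftrightarrow> All a \<in> snd \<Psi>)"

definition quasimodel ::
  "'a fml set \<Rightarrow> 'w set \<Rightarrow> ('w \<Rightarrow> 'w \<Rightarrow> bool) \<Rightarrow> ('w \<Rightarrow> 'w \<Rightarrow> bool)
     \<Rightarrow> ('w \<Rightarrow> 'a fml set \<times> 'a fml set) \<Rightarrow> bool" where
  "quasimodel \<Sigma> W leq S l \<longleftrightarrow>
     \<comment> \<open>leq is a partial order on W\<close>
     (\<forall>w\<in>W. leq w w) \<and>
     (\<forall>u\<in>W. \<forall>v\<in>W. \<forall>w\<in>W. leq u v \<longrightarrow> leq v w \<longrightarrow> leq u w) \<and>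
     (\<forall>u\<in>W. \<forall>v\<in>W. leq u v \<longrightarrow> leq v u \<longrightarrow> u = v) \<and>
     \<comment> \<open>S is a relation on W\<close>
     (\<forall>w v. S w v \<longrightarrow> w \<in> W \<and> v \<in> W) \<and>
     \<comment> \<open>labels are types, monotone along leq\<close>
     (\<forall>w\<in>W. is_type \<Sigma> (l w)) \<and>
     (\<forall>w\<in>W. \<forall>v\<in>W. leq w v \<longrightarrow> type_le (l w) (l v)) \<and>
     \<comment> \<open>implication witnesses\<close>
     (\<forall>w\<in>W. \<forall>a b. Imp a b \<in> snd (l w) \<longrightarrow>
        (\<exists>v\<in>W. leq w v \<and> a \<in> fst (l v) \<and> b \<in> snd (l v))) \<and>
     \<comment> \<open>forward confluence\<close>
     (\<forall>w\<in>W. \<forall>w'\<in>W. \<forall>v. leq w w' \<longrightarrow> S w v \<longrightarrow> (\<exists>v'\<in>W. leq v v' \<and> S w' v')) \<and>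
     \<comment> \<open>sensibility\<close>
     (\<forall>w v. S w v \<longrightarrow> sensible (l w) (l v)) \<and>
     \<comment> \<open>seriality\<close>
     (\<forall>w\<in>W. \<exists>v. S w v) \<and>
     \<comment> \<open>omega-sensibility\<close>
     (\<forall>w\<in>W. \<forall>a. Dia a \<in> fst (l w) \<longrightarrow> (\<exists>n v. (S ^^ n) w v \<and> v \<in> W \<and> a \<in> fst (l v)))"

definition honest :: "'a fml set \<Rightarrow> 'w set \<Rightarrow> ('w \<Rightarrow> 'a fml set \<times> 'a fml set) \<Rightarrow> bool" where
  "honest \<Sigma> W l \<longleftrightarrow>
     (\<forall>w\<in>W. \<forall>a. All a \<in> \<Sigma> \<longrightarrow>
        (All a \<in> fst (l w) \<longrightarrow> (\<forall>v\<in>W. a \<in> fst (l v))) \<and>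
        (All a \<in> snd (l w) \<longrightarrow> (\<exists>v\<in>W. a \<in> snd (l v))))"

definition deterministic :: "'w set \<Rightarrow> ('w \<Rightarrow> 'w \<Rightarrow> bool) \<Rightarrow> bool" where
  "deterministic W S \<longleftrightarrow> (\<forall>w\<in>W. \<exists>!v. S w v)"

definition succ_fun :: "('w \<Rightarrow> 'w \<Rightarrow> bool) \<Rightarrow> 'w \<Rightarrow> 'w" where
  "succ_fun S w = (THE v. S w v)"

definition qm_val ::
  "'w set \<Rightarrow> ('w \<Rightarrow> 'w \<Rightarrow> bool) \<Rightarrow> ('w \<Rightarrow> 'w \<Rightarrow> bool)
     \<Rightarrow> ('w \<Rightarrow> 'a fml set \<times> 'a fml set) \<Rightarrow> 'a fml \<Rightarrow> 'w set" where
  "qm_val W leq S l =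
     val (upset_topology W leq) (succ_fun S) (\<lambda>p. {w\<in>W. Var p \<in> fst (l w)})"

end

theory Submission
  imports Defs
begin

text \<open>The type conditions take care of the Boolean
  connectives. In the up-set topology the interior of a set consists of the points all of whose
  successors lie in it, so monotonicity of the labels and the implication witnesses settle
  implication. Determinism identifies the \<open>S\<close>-paths of length \<open>n\<close> with the iterates
  \<open>f\<^sup>n\<close> of the map \<open>f\<close>, so sensibility handles \<open>\<circ>\<close>, \<omega>-sensibility gives positive \<open>\<Diamond>\<close>,
  and a negative \<open>\<Diamond>\<close> is propagated along the whole orbit.\<close>

lemma istopology_upsets: "istopology (\<lambda>U. U \<subseteq> W \<and> (\<forall>w\<in>U. \<forall>v\<in>W. leq w v \<longrightarrow> v \<in> U))"
  unfolding istopology_def by blast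

lemma openin_upset_topology:
  "openin (upset_topology W leq) U \<longleftrightarrow> U \<subseteq> W \<and> (\<forall>w\<in>U. \<forall>v\<in>W. leq w v \<longrightarrow> v \<in> U)"
  unfolding upset_topology_def topology_inverse'[OF istopology_upsets] by simp

lemma topspace_upset_topology [simp]: "topspace (upset_topology W leq) = W"
  unfolding topspace_def openin_upset_topology by blast

lemma interior_of_upset_topology:
  assumes refl: "\<forall>w\<in>W. leq w w"
    and trans: "\<forall>u\<in>W. \<forall>v\<in>W. \<forall>w\<in>W. leq u v \<longrightarrow> leq v w \<longrightarrow> leq u w"
  shows "w \<in> upset_topology W leq interior_of A \<longleftrightarrow> w \<in> W \<and> (\<forall>v\<in>W. leq w v \<longrightarrow> v \<in> A)"
proof
  assume "w \<in> upset_topology W leq interior_of A"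
  then obtain U where "openin (upset_topology W leq) U" "w \<in> U" "U \<subseteq> A"
    unfolding interior_of_def by blast
  then show "w \<in> W \<and> (\<forall>v\<in>W. leq w v \<longrightarrow> v \<in> A)"
    unfolding openin_upset_topology by blast
next
  assume w: "w \<in> W \<and> (\<forall>v\<in>W. leq w v \<longrightarrow> v \<in> A)"
  let ?U = "{v\<in>W. leq w v}"
  have "openin (upset_topology W leq) ?U"
    unfolding openin_upset_topology using trans w by blast
  moreover have "w \<in> ?U" "?U \<subseteq> A" using w refl by blast+
  ultimately show "w \<in> upset_topology W leq interior_of A"
    unfolding interior_of_def by blast
qed

lemma is_typeD:
  assumes "is_type \<Sigma> \<Phi>"
  shows is_type_disjoint: "snd \<Phi> \<inter> fst \<Phi> = {}"
    and is_type_Bot: "Bot \<notin> fst \<Phi>"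
    and is_type_And_pos: "And a b \<in> fst \<Phi> \<Longrightarrow> a \<in> fst \<Phi> \<and> b \<in> fst \<Phi>"
    and is_type_And_neg: "And a b \<in> snd \<Phi> \<Longrightarrow> a \<in> snd \<Phi> \<or> b \<in> snd \<Phi>"
    and is_type_Or_pos: "Or a b \<in> fst \<Phi> \<Longrightarrow> a \<in> fst \<Phi> \<or> b \<in> fst \<Phi>"
    and is_type_Or_neg: "Or a b \<in> snd \<Phi> \<Longrightarrow> a \<in> snd \<Phi> \<and> b \<in> snd \<Phi>"
    and is_type_Imp_pos: "Imp a b \<in> fst \<Phi> \<Longrightarrow> a \<in> snd \<Phi> \<or> b \<in> fst \<Phi>"
    and is_type_Dia_neg: "Dia a \<in> snd \<Phi> \<Longrightarrow> a \<in> snd \<Phi>"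
  using assms unfolding is_type_def Let_def by blast+

lemma sensibleD:
  assumes "sensible \<Phi> \<Psi>"
  shows sensible_Next_pos: "Next a \<in> fst \<Phi> \<Longrightarrow> a \<in> fst \<Psi>"
    and sensible_Next_neg: "Next a \<in> snd \<Phi> \<Longrightarrow> a \<in> snd \<Psi>"
    and sensible_Dia_neg: "Dia a \<in> snd \<Phi> \<Longrightarrow> Dia a \<in> snd \<Psi>"
  using assms unfolding sensible_def by blast+

lemma quasimodelD:
  assumes "quasimodel \<Sigma> W leq S l"
  shows quasimodel_leq_refl: "\<forall>w\<in>W. leq w w"
    and quasimodel_leq_trans: "\<forall>u\<in>W. \<forall>v\<in>W. \<forall>w\<in>W. leq u v \<longrightarrow> leq v w \<longrightarrow> leq u w"
    and quasimodel_S_in_W: "S w v \<Longrightarrow> w \<in> W \<and> v \<in> W"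
    and quasimodel_label_is_type: "w \<in> W \<Longrightarrow> is_type \<Sigma> (l w)"
    and quasimodel_label_mono: "w \<in> W \<Longrightarrow> v \<in> W \<Longrightarrow> leq w v \<Longrightarrow> type_le (l w) (l v)"
    and quasimodel_Imp_neg_witness:
      "w \<in> W \<Longrightarrow> Imp a b \<in> snd (l w) \<Longrightarrow> \<exists>v\<in>W. leq w v \<and> a \<in> fst (l v) \<and> b \<in> snd (l v)"
    and quasimodel_S_sensible: "S w v \<Longrightarrow> sensible (l w) (l v)"
    and quasimodel_Dia_pos_witness:
      "w \<in> W \<Longrightarrow> Dia a \<in> fst (l w) \<Longrightarrow> \<exists>n v. (S ^^ n) w v \<and> v \<in> W \<and> a \<in> fst (l v)"
  using assms unfolding quasimodel_def by (elim conjE; blast)+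

locale deterministic_quasimodel =
  fixes \<Sigma> :: "'a fml set" and W :: "'w set"
    and leq S :: "'w \<Rightarrow> 'w \<Rightarrow> bool" and l :: "'w \<Rightarrow> 'a fml set \<times> 'a fml set"
  assumes quasimodel: "quasimodel \<Sigma> W leq S l"
    and deterministic: "deterministic W S"
begin

abbreviation f :: "'w \<Rightarrow> 'w" where "f \<equiv> succ_fun S"

abbreviation V :: "'a fml \<Rightarrow> 'w set" where "V \<equiv> qm_val W leq S l"

lemmas leq_refl = quasimodel_leq_refl[OF quasimodel]
  and leq_trans = quasimodel_leq_trans[OF quasimodel]
  and S_in_W = quasimodel_S_in_W[OF quasimodel]
  and label_is_type = quasimodel_label_is_type[OF quasimodel]
  and label_mono = quasimodel_label_mono[OF quasimodel]
  and Imp_neg_witness = quasimodel_Imp_neg_witness[OF quasimodel]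
  and S_sensible = quasimodel_S_sensible[OF quasimodel]
  and Dia_pos_witness = quasimodel_Dia_pos_witness[OF quasimodel]

lemma S_succ_fun: "w \<in> W \<Longrightarrow> S w (f w)"
  using deterministic unfolding deterministic_def succ_fun_def by (blast intro: theI')

lemma S_imp_eq_succ_fun: "w \<in> W \<Longrightarrow> S w v \<Longrightarrow> v = f w"
  using S_succ_fun deterministic unfolding deterministic_def by blast

lemma funpow_succ_fun_in_W: "w \<in> W \<Longrightarrow> (f ^^ n) w \<in> W"
  by (induction n) (auto dest: S_succ_fun S_in_W)

lemma relpowp_imp_eq_funpow: "w \<in> W \<Longrightarrow> (S ^^ n) w v \<Longrightarrow> v = (f ^^ n) w"
proof (induction n arbitrary: v)
  case 0
  then show ?case by simp
next
  case (Suc n)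
  then obtain u where "(S ^^ n) w u" "S u v" by auto
  with Suc S_in_W S_imp_eq_succ_fun show ?case by auto
qed

lemma Dia_neg_along_orbit:
  assumes "w \<in> W" "Dia a \<in> snd (l w)"
  shows "Dia a \<in> snd (l ((f ^^ n) w))"
proof (induction n)
  case 0
  then show ?case using assms(2) by simp
next
  case (Suc n)
  have "S ((f ^^ n) w) ((f ^^ Suc n) w)"
    using S_succ_fun funpow_succ_fun_in_W assms(1) by simp
  with Suc show ?case using sensible_Dia_neg[OF S_sensible] by blast
qed

lemma V_Bot: "V Bot = {}"
  and V_Var: "V (Var p) = {w\<in>W. Var p \<in> fst (l w)}"
  and V_And: "V (And a b) = V a \<inter> V b"
  and V_Or: "V (Or a b) = V a \<union> V b"
  unfolding qm_val_def by simp_all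

lemma mem_V_Imp:
  "w \<in> V (Imp a b) \<longleftrightarrow> w \<in> W \<and> (\<forall>v\<in>W. leq w v \<longrightarrow> v \<in> V a \<longrightarrow> v \<in> V b)"
  unfolding qm_val_def by (auto simp: interior_of_upset_topology[OF leq_refl leq_trans])

lemma mem_V_Next: "w \<in> V (Next a) \<longleftrightarrow> w \<in> W \<and> f w \<in> V a"
  unfolding qm_val_def by simp

lemma mem_V_Dia: "w \<in> V (Dia a) \<longleftrightarrow> w \<in> W \<and> (\<exists>n. (f ^^ n) w \<in> V a)"
  unfolding qm_val_def by auto

lemma truth_lemma:
  assumes "forall_free \<phi>" "w \<in> W"
  shows "(\<phi> \<in> fst (l w) \<longrightarrow> w \<in> V \<phi>) \<and> (\<phi> \<in> snd (l w) \<longrightarrow> w \<notin> V \<phi>)"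
  using assms
proof (induction \<phi> arbitrary: w)
  case Bot
  then show ?case using is_type_Bot[OF label_is_type] by (simp add: V_Bot)
next
  case (Var p)
  then show ?case using is_type_disjoint[OF label_is_type] by (auto simp: V_Var)
next
  case (And a b)
  then have "(a \<in> fst (l w) \<longrightarrow> w \<in> V a) \<and> (a \<in> snd (l w) \<longrightarrow> w \<notin> V a)"
    and "(b \<in> fst (l w) \<longrightarrow> w \<in> V b) \<and> (b \<in> snd (l w) \<longrightarrow> w \<notin> V b)" by simp_all
  with And.prems(2) show ?case
    using is_type_And_pos[OF label_is_type] is_type_And_neg[OF label_is_type] V_And by blast
next
  case (Or a b)
  then have "(a \<in> fst (l w) \<longrightarrow> w \<in> V a) \<and> (a \<in> snd (l w) \<longrightarrow> w \<notin> V a)"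
    and "(b \<in> fst (l w) \<longrightarrow> w \<in> V b) \<and> (b \<in> snd (l w) \<longrightarrow> w \<notin> V b)" by simp_all
  with Or.prems(2) show ?case
    using is_type_Or_pos[OF label_is_type] is_type_Or_neg[OF label_is_type] V_Or by blast
next
  case (Imp a b)
  show ?case
  proof (intro conjI impI)
    assume Imp_pos: "Imp a b \<in> fst (l w)"
    have "v \<notin> V a \<or> v \<in> V b" if "v \<in> W" "leq w v" for v
    proof -
      have "Imp a b \<in> fst (l v)"
        using label_mono[OF Imp.prems(2) that] Imp_pos unfolding type_le_def by blast
      then have "a \<in> snd (l v) \<or> b \<in> fst (l v)"
        using is_type_Imp_pos[OF label_is_type[OF \<open>v \<in> W\<close>]] by blast
      then show ?thesis using Imp.IH Imp.prems(1) \<open>v \<in> W\<close> by auto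
    qed
    then show "w \<in> V (Imp a b)" using Imp.prems(2) mem_V_Imp by blast
  next
    assume "Imp a b \<in> snd (l w)"
    then obtain v where "v \<in> W" "leq w v" "a \<in> fst (l v)" "b \<in> snd (l v)"
      using Imp_neg_witness Imp.prems(2) by blast
    with Imp.IH Imp.prems(1) show "w \<notin> V (Imp a b)" unfolding mem_V_Imp by auto
  qed
next
  case (Next a)
  have "sensible (l w) (l (f w))" "f w \<in> W"
    using S_succ_fun[OF Next.prems(2)] S_sensible S_in_W by blast+
  moreover from this(2) Next
  have "(a \<in> fst (l (f w)) \<longrightarrow> f w \<in> V a) \<and> (a \<in> snd (l (f w)) \<longrightarrow> f w \<notin> V a)" by simp
  ultimately show ?case
    using Next.prems(2) sensible_Next_pos sensible_Next_neg unfolding mem_V_Next by blast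
next
  case (Dia a)
  show ?case
  proof (intro conjI impI)
    assume "Dia a \<in> fst (l w)"
    then obtain n v where "(S ^^ n) w v" "v \<in> W" "a \<in> fst (l v)"
      using Dia_pos_witness Dia.prems(2) by blast
    moreover from this(1) have "v = (f ^^ n) w"
      using relpowp_imp_eq_funpow Dia.prems(2) by blast
    ultimately have "(f ^^ n) w \<in> V a" using Dia by simp
    then show "w \<in> V (Dia a)" using Dia.prems(2) unfolding mem_V_Dia by blast
  next
    assume "Dia a \<in> snd (l w)"
    then have "a \<in> snd (l ((f ^^ n) w))" for n
      using Dia_neg_along_orbit Dia.prems(2) funpow_succ_fun_in_W
        is_type_Dia_neg[OF label_is_type] by blast
    with Dia funpow_succ_fun_in_W show "w \<notin> V (Dia a)" unfolding mem_V_Dia by auto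
  qed
next
  case (All a)
  then show ?case by simp
qed

end

text \<open>Honesty and closure under subformulas are only needed for formulas containing \<open>\<forall>\<close>.\<close>

theorem lemma4p7:
  fixes \<Sigma> :: "'a fml set" and W :: "'w set"
    and leq S :: "'w \<Rightarrow> 'w \<Rightarrow> bool" and l :: "'w \<Rightarrow> 'a fml set \<times> 'a fml set"
  assumes "subformula_closed \<Sigma>"
    and "quasimodel \<Sigma> W leq S l"
    and "honest \<Sigma> W l"
    and "deterministic W S"
  shows "\<forall>\<phi> w. forall_free \<phi> \<and> w \<in> W \<longrightarrow>
           (\<phi> \<in> fst (l w) \<longrightarrow> w \<in> qm_val W leq S l \<phi>) \<and>
           (\<phi> \<in> snd (l w) \<longrightarrow> w \<notin> qm_val W leq S l \<phi>)"
proof -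
  interpret deterministic_quasimodel \<Sigma> W leq S l
    using assms(2,4) by unfold_locales
  show ?thesis using truth_lemma by blast
qed

end
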